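(* Let $L\ge 2$, let $\lambda_1>\cdots>\lambda_L\ge 0$ be known reals and $r_1,\ldots,r_L$ known positive integers. For $\sigma_\alpha^2\ge0$, $\sigma_\varepsilon^2>0$, let $S_\ell=(\lambda_\ell\sigma_\alpha^2+\sigma_\varepsilon^2)V_\ell$ with $V_1,\ldots,V_L$ independent, $V_\ell\sim\chi^2_{r_\ell}$, let $\rho=\sigma_\alpha^2/(\sigma_\alpha^2+\sigma_\varepsilon^2)$, and let $X=(X_1,\ldots,X_{L-1})$ with $X_\ell=(S_\ell/r_\ell)/(S_L/r_L)$, with sampling distribution $\mathsf{P}_{X\mid\rho,\sigma_\varepsilon^2}$. For $\alpha\in(0,1)$ define the plausibility interval $\Pi_\alpha(x)=\{r\in[0,1):\mathsf{pl}_{x\mid H_r(x),r}(r)>\alpha\}$, with $H_r$ and the plausibility function as defined in the context. Then for every $\rho\in[0,1)$ and every $\sigma_\varepsilon^2>0$, $\mathsf{P}_{X\mid\rho,\sigma_\varepsilon^2}\{\Pi_\alpha(X)\ni\rho\}=1-\alpha$.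
   Context: Definitions: $f_\ell(\rho)=\dfrac{1+\rho(\lambda_\ell-1)}{1+\rho(\lambda_L-1)}$, $\ell=1,\ldots,L-1$; $U_\ell=(V_\ell/r_\ell)/(V_L/r_L)$, so $X_\ell=f_\ell(\rho)U_\ell$. Let $g(\rho)=\bigl(\tfrac{d}{d\rho}\log f_\ell(\rho)\bigr)_{\ell=1}^{L-1}$ and $M_\rho$ an $(L-2)\times(L-1)$ matrix whose rows form a basis of the orthogonal complement of $g(\rho)$ (vacuous if $L=2$). For $u,x\in(0,\infty)^{L-1}$: $\eta_\rho(u)=M_\rho(\log u_\ell)_{\ell}^\top$, $\tau(u)=\sum_\ell\log u_\ell$, $H_\rho(x)=M_\rho\bigl(\log(x_\ell/f_\ell(\rho))\bigr)_\ell^\top$, $T(x)=\sum_\ell\log x_\ell$, $\phi(\rho)=\sum_\ell\log f_\ell(\rho)$. For a value $h$, $\mathsf{P}_{V\mid h,\rho}$ is the conditional distribution of $V=\tau(U)$ given $\eta_\rho(U)=h$, $\mu_{h,\rho}$ its mean, and $F_{h,\rho}$ the distribution function of $|V-\mu_{h,\rho}|$ under $\mathsf{P}_{V\mid h,\rho}$. The plausibility function is $\mathsf{pl}_{x\mid h,\rho}(\rho)=1-F_{h,\rho}(|T(x)-\phi(\rho)-\mu_{h,\rho}|)$. *)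

theory Defs
  imports "HOL-Probability.Probability"
begin

(* Indices: ell ranges over {1..L}; vectors in R^(L-1) are functions nat => real
   used on {1..L-1}; vectors in R^(L-2) (values h of eta) are extensional functions
   on {..<L-2}, measured with PiM. *)

definition chi2_density :: "nat \<Rightarrow> real \<Rightarrow> real" where
  "chi2_density k x = (if x > 0 then x powr (real k / 2 - 1) * exp (- x / 2)
                        / (2 powr (real k / 2) * Gamma (real k / 2)) else 0)"

definition fl :: "(nat \<Rightarrow> real) \<Rightarrow> nat \<Rightarrow> nat \<Rightarrow> real \<Rightarrow> real" where
  "fl lam L l r = (1 + r * (lam l - 1)) / (1 + r * (lam L - 1))"

definition gvec :: "(nat \<Rightarrow> real) \<Rightarrow> nat \<Rightarrow> real \<Rightarrow> nat \<Rightarrow> real" where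
  "gvec lam L r l = deriv (\<lambda>t. ln (fl lam L l t)) r"

definition compl_basis :: "nat \<Rightarrow> (nat \<Rightarrow> real) \<Rightarrow> (nat \<Rightarrow> nat \<Rightarrow> real) \<Rightarrow> bool" where
  "compl_basis L g Mm \<longleftrightarrow>
     (\<forall>i<L-2. (\<Sum>l=1..L-1. Mm i l * g l) = 0) \<and>
     (\<forall>c. (\<forall>l\<in>{1..L-1}. (\<Sum>i<L-2. c i * Mm i l) = 0) \<longrightarrow> (\<forall>i<L-2. c i = 0)) \<and>
     (\<forall>v. (\<Sum>l=1..L-1. v l * g l) = 0 \<longrightarrow>
          (\<exists>c. \<forall>l\<in>{1..L-1}. v l = (\<Sum>i<L-2. c i * Mm i l)))"

definition eta :: "nat \<Rightarrow> (nat \<Rightarrow> nat \<Rightarrow> real) \<Rightarrow> (nat \<Rightarrow> real) \<Rightarrow> (nat \<Rightarrow> real)" where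
  "eta L Mm u = restrict (\<lambda>i. \<Sum>l=1..L-1. Mm i l * ln (u l)) {..<L-2}"

definition tau :: "nat \<Rightarrow> (nat \<Rightarrow> real) \<Rightarrow> real" where
  "tau L u = (\<Sum>l=1..L-1. ln (u l))"

definition Hfun :: "(nat \<Rightarrow> real) \<Rightarrow> nat \<Rightarrow> (nat \<Rightarrow> nat \<Rightarrow> real) \<Rightarrow> real \<Rightarrow> (nat \<Rightarrow> real) \<Rightarrow> (nat \<Rightarrow> real)" where
  "Hfun lam L Mm r x = restrict (\<lambda>i. \<Sum>l=1..L-1. Mm i l * ln (x l / fl lam L l r)) {..<L-2}"

definition Tfun :: "nat \<Rightarrow> (nat \<Rightarrow> real) \<Rightarrow> real" where
  "Tfun L x = (\<Sum>l=1..L-1. ln (x l))"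

definition phi :: "(nat \<Rightarrow> real) \<Rightarrow> nat \<Rightarrow> real \<Rightarrow> real" where
  "phi lam L r = (\<Sum>l=1..L-1. ln (fl lam L l r))"

definition hspace :: "nat \<Rightarrow> (nat \<Rightarrow> real) measure" where
  "hspace L = PiM {..<L-2} (\<lambda>_. borel)"

definition cond_mean :: "real measure \<Rightarrow> real" where
  "cond_mean P = (\<integral>v. v \<partial>P)"

definition dev_cdf :: "real measure \<Rightarrow> real \<Rightarrow> real" where
  "dev_cdf P t = measure P {v. \<bar>v - cond_mean P\<bar> \<le> t}"

text \<open>K r h is the conditional distribution P_{V|h,r}; pl x h r = pl_{x|h,r}(r).\<close>
definition plaus :: "(nat \<Rightarrow> real) \<Rightarrow> nat \<Rightarrow> (real \<Rightarrow> (nat \<Rightarrow> real) \<Rightarrow> real measure)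
      \<Rightarrow> (nat \<Rightarrow> real) \<Rightarrow> (nat \<Rightarrow> real) \<Rightarrow> real \<Rightarrow> real" where
  "plaus lam L K x h r =
     1 - dev_cdf (K r h) \<bar>Tfun L x - phi lam L r - cond_mean (K r h)\<bar>"

definition plaus_interval :: "(nat \<Rightarrow> real) \<Rightarrow> nat \<Rightarrow> (real \<Rightarrow> nat \<Rightarrow> nat \<Rightarrow> real)
      \<Rightarrow> (real \<Rightarrow> (nat \<Rightarrow> real) \<Rightarrow> real measure) \<Rightarrow> real \<Rightarrow> (nat \<Rightarrow> real) \<Rightarrow> real set" where
  "plaus_interval lam L Mm K \<alpha> x =
     {r \<in> {0..<1}. plaus lam L K x (Hfun lam L (Mm r) r x) r > \<alpha>}"

definition is_cond_dist :: "'a measure \<Rightarrow> nat \<Rightarrow> ('a \<Rightarrow> nat \<Rightarrow> real)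
      \<Rightarrow> (nat \<Rightarrow> nat \<Rightarrow> real) \<Rightarrow> ((nat \<Rightarrow> real) \<Rightarrow> real measure) \<Rightarrow> bool" where
  "is_cond_dist M L U Mm Kr \<longleftrightarrow>
     Kr \<in> hspace L \<rightarrow>\<^sub>M prob_algebra borel \<and>
     (\<forall>A\<in>sets (hspace L). \<forall>B\<in>sets borel.
        emeasure M {\<omega>\<in>space M. eta L Mm (U \<omega>) \<in> A \<and> tau L (U \<omega>) \<in> B}
        = (\<integral>\<^sup>+\<omega>. indicator A (eta L Mm (U \<omega>)) * emeasure (Kr (eta L Mm (U \<omega>))) B \<partial>M))"

end

theory Submission
  imports Defs
begin

text \<open>Write U for the vector of ratios (V_l/r_l)/(V_L/r_L). Since X_l = f_l(\<rho>) U_l, we have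
  H_\<rho>(X) = \<eta>_\<rho>(U) and T(X) - \<phi>(\<rho>) = \<tau>(U), so \<rho> \<in> \<Pi>_\<alpha>(X) says that the conditional
  distribution function of |V - \<mu>|, evaluated at the observed |\<tau>(U) - \<mu>|, is below 1 - \<alpha>.
  Conditionally on \<eta>_\<rho>(U) this is the probability integral transform, which is uniform as soon
  as the conditional law of \<tau>(U) has no atoms; integrating out \<eta>_\<rho>(U) gives exactly 1 - \<alpha>.
  The absence of atoms is the real work: the logarithms of the V_l have a joint Lebesgue density,
  and in these coordinates the direction (g(\<rho>), 0) leaves \<eta>_\<rho> fixed while moving \<tau>
  strictly, so a set whose \<eta>-sections are countable (such as the atoms of the kernel) is null.\<close>

lemma (in real_distribution) cdf_sublevel_eq_lessThan:
  assumes cont: "\<And>y. isCont (cdf M) y" and \<beta>: "0 < \<beta>" "\<beta> < 1"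
  obtains s where "{y. cdf M y < \<beta>} = {..<s}" and "cdf M s = \<beta>"
proof -
  define T where "T = {y. \<beta> \<le> cdf M y}"
  obtain y0 where y0: "\<And>y. y \<ge> y0 \<Longrightarrow> cdf M y > \<beta>"
    using order_tendstoD(1)[OF cdf_lim_at_top_prob \<beta>(2)] by (auto simp: eventually_at_top_linorder)
  obtain y1 where y1: "\<And>y. y \<le> y1 \<Longrightarrow> cdf M y < \<beta>"
    using order_tendstoD(2)[OF cdf_lim_at_bot \<beta>(1)] by (auto simp: eventually_at_bot_linorder)
  have "T \<noteq> {}" using y0[of y0] by (auto simp: T_def intro!: exI[of _ y0])
  moreover have T_bdd: "bdd_below T"
    unfolding bdd_below_def T_def
  proof (intro exI[of _ y1] ballI)
    fix x assume "x \<in> {y. \<beta> \<le> cdf M y}"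
    then show "y1 \<le> x" using y1[of x] by force
  qed
  moreover have "closed T"
    unfolding T_def using cont
    by (intro closed_Collect_le continuous_intros) (auto simp: continuous_on_eq_continuous_at)
  ultimately have sT: "Inf T \<in> T" by (rule closed_contains_Inf)
  have sublevel: "{y. cdf M y < \<beta>} = {..<Inf T}"
  proof (intro set_eqI iffI)
    fix y assume "y \<in> {y. cdf M y < \<beta>}"
    moreover have "y \<ge> Inf T \<Longrightarrow> cdf M y \<ge> \<beta>" using sT cdf_nondecreasing[of "Inf T" y] by (auto simp: T_def)
    ultimately show "y \<in> {..<Inf T}" by force
  next
    fix y assume "y \<in> {..<Inf T}"
    then have "y \<notin> T" using cInf_lower[OF _ T_bdd, of y] by auto
    then show "y \<in> {y. cdf M y < \<beta>}" by (auto simp: T_def)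
  qed
  have "cdf M (Inf T) = \<beta>"
  proof (rule ccontr)
    assume "cdf M (Inf T) \<noteq> \<beta>"
    then have gt: "cdf M (Inf T) > \<beta>" using sT by (auto simp: T_def)
    have "(cdf M \<longlongrightarrow> cdf M (Inf T)) (at_left (Inf T))"
      using cont[of "Inf T"] by (simp add: isCont_def filterlim_at_split)
    from order_tendstoD(1)[OF this gt] obtain b
      where "b < Inf T" and "\<And>y. b < y \<Longrightarrow> y < Inf T \<Longrightarrow> cdf M y > \<beta>"
      unfolding eventually_at_left_field by blast
    then have "cdf M ((b + Inf T) / 2) > \<beta>" and "(b + Inf T) / 2 \<in> {y. cdf M y < \<beta>}"
      using sublevel by auto
    then show False by simp
  qed
  with sublevel show thesis by (rule that)
qed

lemma (in real_distribution) measure_cdf_less: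
  assumes atomless: "\<And>y. measure M {y} = 0" and \<beta>: "0 < \<beta>" "\<beta> < 1"
  shows "measure M {y. cdf M y < \<beta>} = \<beta>"
proof -
  obtain s where s: "{y. cdf M y < \<beta>} = {..<s}" "cdf M s = \<beta>"
    using cdf_sublevel_eq_lessThan[OF _ \<beta>] atomless isCont_cdf by blast
  have "measure M {..s} = measure M {..<s} + measure M {s}"
    by (subst finite_measure_Union[symmetric]) (auto intro!: arg_cong[where f="measure M"])
  then show ?thesis using s atomless[of s] by (simp add: cdf_def)
qed

lemma measure_dev_cdf_less:
  fixes Q :: "real measure"
  assumes Q: "prob_space Q" "sets Q = sets borel" and atomless: "\<And>v. measure Q {v} = 0"
    and \<beta>: "0 < \<beta>" "\<beta> < 1"
  shows "measure Q {v. dev_cdf Q \<bar>v - cond_mean Q\<bar> < \<beta>} = \<beta>"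
proof -
  interpret prob_space Q by (rule Q(1))
  define m where "m = cond_mean Q"
  let ?dev = "\<lambda>w. \<bar>w - m\<bar>"
  have dev_measurable: "?dev \<in> borel_measurable Q" using Q(2) by (simp cong: measurable_cong_sets)
  define D where "D = distr Q borel ?dev"
  interpret D: real_distribution D unfolding D_def using dev_measurable by (rule real_distribution_distr)
  have space_Q: "space Q = UNIV" using sets_eq_imp_space_eq[OF Q(2)] by simp
  have cdf_D: "cdf D y = dev_cdf Q y" for y
    unfolding cdf_def D_def using dev_measurable
    by (subst measure_distr) (auto simp: dev_cdf_def m_def space_Q vimage_def)
  have atomless_D: "measure D {y} = 0" for y
  proof -
    have "measure D {y} = measure Q (?dev -` {y} \<inter> space Q)"
      unfolding D_def using dev_measurable by (subst measure_distr) auto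
    also have "\<dots> \<le> measure Q {m + y, m - y}"
      using Q(2) by (intro finite_measure_mono) auto
    also have "\<dots> \<le> measure Q {m + y} + measure Q {m - y}"
      using Q(2) by (subst insert_is_Un) (intro measure_Un_le; auto)
    finally show ?thesis using atomless[of "m + y"] atomless[of "m - y"] measure_nonneg[of D "{y}"] by simp
  qed
  have "cdf D \<in> borel_measurable borel"
    by (intro borel_measurable_mono) (simp add: D.cdf_nondecreasing mono_def)
  then have "measure Q (?dev -` {y. cdf D y < \<beta>} \<inter> space Q) = measure D {y. cdf D y < \<beta>}"
    unfolding D_def using dev_measurable by (subst measure_distr) auto
  also have "\<dots> = \<beta>" by (rule D.measure_cdf_less[OF atomless_D \<beta>])
  finally show ?thesis by (simp add: cdf_D space_Q m_def vimage_def)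
qed

lemma kernel_section_measurable:
  fixes \<kappa> :: "'x \<Rightarrow> real measure"
  assumes \<kappa>: "\<kappa> \<in> X \<rightarrow>\<^sub>M subprob_algebra borel" and S: "S \<in> sets (X \<Otimes>\<^sub>M borel)"
  shows "(\<lambda>x. emeasure (\<kappa> x) (Pair x -` S)) \<in> borel_measurable X"
proof -
  have "(\<lambda>x. \<integral>\<^sup>+ y. indicator S (x, y) \<partial>\<kappa> x) \<in> borel_measurable X"
    by (rule nn_integral_measurable_subprob_algebra2[OF _ \<kappa>]) (use S in simp)
  moreover have "(\<integral>\<^sup>+ y. indicator S (x, y) \<partial>\<kappa> x) = emeasure (\<kappa> x) (Pair x -` S)" if "x \<in> space X" for x
  proof -
    have "sets (\<kappa> x) = sets borel" using subprob_measurableD(2)[OF \<kappa> that] .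
    then have "(\<integral>\<^sup>+ y. indicator (Pair x -` S) y \<partial>\<kappa> x) = emeasure (\<kappa> x) (Pair x -` S)"
      using sets_Pair1[OF S] by (intro nn_integral_indicator) simp
    then show ?thesis by (simp add: indicator_def)
  qed
  ultimately show ?thesis by (rule measurable_cong[THEN iffD1, rotated]) simp
qed

locale cond_kernel = prob_space M for M :: "'a measure" +
  fixes H :: "'h measure" and W :: "'a \<Rightarrow> 'h" and T :: "'a \<Rightarrow> real"
    and K :: "'h \<Rightarrow> real measure"
  assumes W_measurable: "W \<in> M \<rightarrow>\<^sub>M H" and T_measurable: "T \<in> borel_measurable M"
    and K_measurable: "K \<in> H \<rightarrow>\<^sub>M prob_algebra borel"
    and emeasure_rectangle: "\<And>A B. A \<in> sets H \<Longrightarrow> B \<in> sets borel \<Longrightarrow>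
      emeasure M {\<omega>\<in>space M. W \<omega> \<in> A \<and> T \<omega> \<in> B}
        = (\<integral>\<^sup>+\<omega>. indicator A (W \<omega>) * emeasure (K (W \<omega>)) B \<partial>M)"
begin

lemma K_subprob: "K \<in> H \<rightarrow>\<^sub>M subprob_algebra borel"
  by (rule measurable_prob_algebraD[OF K_measurable])

lemma prob_space_K: "h \<in> space H \<Longrightarrow> prob_space (K h)"
  using measurable_space[OF K_measurable] by (simp add: space_prob_algebra)

lemma sets_K: "h \<in> space H \<Longrightarrow> sets (K h) = sets borel"
  using K_subprob by (rule subprob_measurableD(2))

lemma W_T_measurable: "(\<lambda>\<omega>. (W \<omega>, T \<omega>)) \<in> M \<rightarrow>\<^sub>M H \<Otimes>\<^sub>M borel"
  using W_measurable T_measurable by (intro measurable_Pair) auto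

definition joint_law :: "('h \<times> real) measure" where
  "joint_law = distr M H W \<bind> (\<lambda>h. distr (K h) (H \<Otimes>\<^sub>M borel) (Pair h))"

lemma Pair_kernel_measurable: "(\<lambda>h. distr (K h) (H \<Otimes>\<^sub>M borel) (Pair h)) \<in> H \<rightarrow>\<^sub>M subprob_algebra (H \<Otimes>\<^sub>M borel)"
  by (rule measurable_distr2[OF _ K_subprob]) simp

lemma space_distr_W_nonempty: "space (distr M H W) \<noteq> {}"
  using measurable_space[OF W_measurable] not_empty by auto

lemma emeasure_joint_law:
  assumes G: "G \<in> sets (H \<Otimes>\<^sub>M borel)"
  shows "emeasure joint_law G = (\<integral>\<^sup>+\<omega>. emeasure (K (W \<omega>)) (Pair (W \<omega>) -` G) \<partial>M)"
proof -
  have "emeasure joint_law G = (\<integral>\<^sup>+\<omega>. emeasure (distr (K (W \<omega>)) (H \<Otimes>\<^sub>M borel) (Pair (W \<omega>))) G \<partial>M)"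
    unfolding joint_law_def using space_distr_W_nonempty Pair_kernel_measurable G W_measurable
    by (subst emeasure_bind) (auto simp: nn_integral_distr)
  also have "\<dots> = (\<integral>\<^sup>+\<omega>. emeasure (K (W \<omega>)) (Pair (W \<omega>) -` G) \<partial>M)"
  proof (rule nn_integral_cong)
    fix \<omega> assume "\<omega> \<in> space M"
    then have h: "W \<omega> \<in> space H" using measurable_space[OF W_measurable] by auto
    then have "Pair (W \<omega>) \<in> K (W \<omega>) \<rightarrow>\<^sub>M H \<Otimes>\<^sub>M borel"
      using sets_K[OF h] by (simp cong: measurable_cong_sets)
    moreover have "space (K (W \<omega>)) = UNIV" using sets_eq_imp_space_eq[OF sets_K[OF h]] by simp
    ultimately show "emeasure (distr (K (W \<omega>)) (H \<Otimes>\<^sub>M borel) (Pair (W \<omega>))) G = emeasure (K (W \<omega>)) (Pair (W \<omega>) -` G)"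
      using G by (subst emeasure_distr) auto
  qed
  finally show ?thesis .
qed

lemma distr_W_T_eq_joint_law: "distr M (H \<Otimes>\<^sub>M borel) (\<lambda>\<omega>. (W \<omega>, T \<omega>)) = joint_law"
proof (rule measure_eqI_generator_eq[OF Int_stable_pair_measure_generator pair_measure_closed])
  show "sets (distr M (H \<Otimes>\<^sub>M borel) (\<lambda>\<omega>. (W \<omega>, T \<omega>)))
      = sigma_sets (space H \<times> space borel) {a \<times> b |a b. a \<in> sets H \<and> b \<in> sets (borel :: real measure)}"
    by (simp add: sets_pair_measure)
  show "sets joint_law = sigma_sets (space H \<times> space borel) {a \<times> b |a b. a \<in> sets H \<and> b \<in> sets (borel :: real measure)}"
    unfolding joint_law_def using space_distr_W_nonempty Pair_kernel_measurable
    by (subst sets_bind[OF subprob_measurableD(2)[OF Pair_kernel_measurable]]) (auto simp: sets_pair_measure)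
  fix X assume "X \<in> {a \<times> b |a b. a \<in> sets H \<and> b \<in> sets (borel :: real measure)}"
  then obtain a b where X: "X = a \<times> b" "a \<in> sets H" "b \<in> sets (borel :: real measure)" by auto
  then have "X \<in> sets (H \<Otimes>\<^sub>M borel)" by auto
  then have "emeasure (distr M (H \<Otimes>\<^sub>M borel) (\<lambda>\<omega>. (W \<omega>, T \<omega>))) X = emeasure M {\<omega>\<in>space M. W \<omega> \<in> a \<and> T \<omega> \<in> b}"
    using W_T_measurable X by (subst emeasure_distr) (auto intro!: arg_cong[where f="emeasure M"])
  also have "\<dots> = (\<integral>\<^sup>+\<omega>. emeasure (K (W \<omega>)) (Pair (W \<omega>) -` X) \<partial>M)"
    using X by (simp add: emeasure_rectangle) (auto intro!: nn_integral_cong simp: indicator_def)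
  also have "\<dots> = emeasure joint_law X" using emeasure_joint_law \<open>X \<in> sets (H \<Otimes>\<^sub>M borel)\<close> by simp
  finally show "emeasure (distr M (H \<Otimes>\<^sub>M borel) (\<lambda>\<omega>. (W \<omega>, T \<omega>))) X = emeasure joint_law X" .
next
  show "range (\<lambda>_. space H \<times> space borel) \<subseteq> {a \<times> b |a b. a \<in> sets H \<and> b \<in> sets (borel :: real measure)}"
    by (intro subsetI, simp only: image_iff) (blast intro: sets.top)
  show "(\<Union>i. space H \<times> space borel) = space H \<times> (space borel :: real set)" by simp
  have "prob_space (distr M (H \<Otimes>\<^sub>M borel) (\<lambda>\<omega>. (W \<omega>, T \<omega>)))" by (rule prob_space_distr[OF W_T_measurable])
  then show "emeasure (distr M (H \<Otimes>\<^sub>M borel) (\<lambda>\<omega>. (W \<omega>, T \<omega>))) (space H \<times> space borel) \<noteq> \<infinity>" for i :: nat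
    using finite_measure.emeasure_finite[OF prob_space.finite_measure] by auto
qed

lemma emeasure_W_T_in:
  assumes G: "G \<in> sets (H \<Otimes>\<^sub>M borel)"
  shows "emeasure M {\<omega>\<in>space M. (W \<omega>, T \<omega>) \<in> G} = (\<integral>\<^sup>+\<omega>. emeasure (K (W \<omega>)) (Pair (W \<omega>) -` G) \<partial>M)"
proof -
  have "emeasure M {\<omega>\<in>space M. (W \<omega>, T \<omega>) \<in> G} = emeasure (distr M (H \<Otimes>\<^sub>M borel) (\<lambda>\<omega>. (W \<omega>, T \<omega>))) G"
    using G W_T_measurable by (subst emeasure_distr) (auto intro!: arg_cong[where f="emeasure M"])
  then show ?thesis by (simp add: distr_W_T_eq_joint_law emeasure_joint_law[OF G])
qed

definition atoms :: "('h \<times> real) set" where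
  "atoms = {x \<in> space (H \<Otimes>\<^sub>M borel). emeasure (K (fst x)) {snd x} \<noteq> 0}"

lemma sets_atoms: "atoms \<in> sets (H \<Otimes>\<^sub>M borel)"
proof -
  define D where "D = {y \<in> space ((H \<Otimes>\<^sub>M borel) \<Otimes>\<^sub>M (borel :: real measure)). snd y = snd (fst y)}"
  have "D \<in> sets ((H \<Otimes>\<^sub>M borel) \<Otimes>\<^sub>M (borel :: real measure))" unfolding D_def by measurable
  with measurable_compose[OF measurable_fst K_subprob]
  have "(\<lambda>x. emeasure (K (fst x)) (Pair x -` D)) \<in> borel_measurable (H \<Otimes>\<^sub>M borel)"
    by (rule kernel_section_measurable)
  then have "(\<lambda>x. emeasure (K (fst x)) {snd x}) \<in> borel_measurable (H \<Otimes>\<^sub>M borel)"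
    by (rule measurable_cong[THEN iffD1, rotated]) (auto simp: D_def space_pair_measure)
  then show ?thesis unfolding atoms_def by measurable
qed

text \<open>A probability measure has only countably many atoms, so this criterion applies
  in particular to the set of all atoms of the kernel.\<close>
lemma AE_atomless:
  assumes null: "\<And>G. G \<in> sets (H \<Otimes>\<^sub>M borel) \<Longrightarrow> (\<And>h. h \<in> space H \<Longrightarrow> countable (Pair h -` G))
      \<Longrightarrow> emeasure M {\<omega>\<in>space M. (W \<omega>, T \<omega>) \<in> G} = 0"
  shows "AE \<omega> in M. \<forall>v. measure (K (W \<omega>)) {v} = 0"
proof -
  have "countable (Pair h -` atoms)" if h: "h \<in> space H" for h
  proof -
    interpret K: prob_space "K h" using prob_space_K[OF h] .
    have "Pair h -` atoms \<subseteq> {v. measure (K h) {v} \<noteq> 0}"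
      by (auto simp: atoms_def K.emeasure_eq_measure)
    then show ?thesis using countable_subset K.countable_support by blast
  qed
  with null[OF sets_atoms] have "(\<integral>\<^sup>+\<omega>. emeasure (K (W \<omega>)) (Pair (W \<omega>) -` atoms) \<partial>M) = 0"
    by (simp add: emeasure_W_T_in[OF sets_atoms])
  moreover have "(\<lambda>\<omega>. emeasure (K (W \<omega>)) (Pair (W \<omega>) -` atoms)) \<in> borel_measurable M"
    using kernel_section_measurable[OF K_subprob sets_atoms] W_measurable by (rule measurable_compose[rotated])
  ultimately have "AE \<omega> in M. emeasure (K (W \<omega>)) (Pair (W \<omega>) -` atoms) = 0"
    by (simp add: nn_integral_0_iff_AE)
  then show ?thesis
  proof (rule AE_mp, intro AE_I2 impI allI)
    fix \<omega> v assume \<omega>: "\<omega> \<in> space M" and null_section: "emeasure (K (W \<omega>)) (Pair (W \<omega>) -` atoms) = 0"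
    have h: "W \<omega> \<in> space H" using measurable_space[OF W_measurable \<omega>] .
    interpret K: prob_space "K (W \<omega>)" using prob_space_K[OF h] .
    have "Pair (W \<omega>) -` atoms \<in> sets (K (W \<omega>))" using sets_Pair1[OF sets_atoms] sets_K[OF h] by simp
    moreover have "measure (K (W \<omega>)) {v} \<noteq> 0 \<Longrightarrow> {v} \<subseteq> Pair (W \<omega>) -` atoms"
      using h by (auto simp: atoms_def space_pair_measure K.emeasure_eq_measure)
    ultimately show "measure (K (W \<omega>)) {v} = 0"
      using null_section emeasure_mono[of "{v}" "Pair (W \<omega>) -` atoms" "K (W \<omega>)"]
      by (auto simp: K.emeasure_eq_measure)
  qed
qed

lemma cond_mean_K_measurable [measurable]: "(\<lambda>h. cond_mean (K h)) \<in> borel_measurable H"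
  unfolding cond_mean_def using K_subprob
  by (rule measurable_compose[OF _ integral_measurable_subprob_algebra]) simp

lemma dev_cdf_K_measurable:
  "(\<lambda>x. dev_cdf (K (fst x)) (snd x)) \<in> borel_measurable (H \<Otimes>\<^sub>M borel)"
proof -
  define S where "S = {y \<in> space ((H \<Otimes>\<^sub>M borel) \<Otimes>\<^sub>M (borel :: real measure)).
      \<bar>snd y - cond_mean (K (fst (fst y)))\<bar> \<le> snd (fst y)}"
  have "S \<in> sets ((H \<Otimes>\<^sub>M borel) \<Otimes>\<^sub>M (borel :: real measure))" unfolding S_def by measurable
  with measurable_compose[OF measurable_fst K_subprob]
  have "(\<lambda>x. emeasure (K (fst x)) (Pair x -` S)) \<in> borel_measurable (H \<Otimes>\<^sub>M borel)"
    by (rule kernel_section_measurable)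
  then have "(\<lambda>x. emeasure (K (fst x)) {v. \<bar>v - cond_mean (K (fst x))\<bar> \<le> snd x}) \<in> borel_measurable (H \<Otimes>\<^sub>M borel)"
    by (rule measurable_cong[THEN iffD1, rotated]) (auto simp: S_def space_pair_measure)
  then show ?thesis by (simp add: dev_cdf_def measure_def)
qed

lemma dev_cdf_K_compose_measurable [measurable]:
  assumes "f \<in> N \<rightarrow>\<^sub>M H" "t \<in> borel_measurable N"
  shows "(\<lambda>x. dev_cdf (K (f x)) (t x)) \<in> borel_measurable N"
  using measurable_compose[OF measurable_Pair[OF assms] dev_cdf_K_measurable] by simp

definition pivot_below :: "real \<Rightarrow> ('h \<times> real) set" where
  "pivot_below \<beta> = {x \<in> space (H \<Otimes>\<^sub>M borel). dev_cdf (K (fst x)) \<bar>snd x - cond_mean (K (fst x))\<bar> < \<beta>}"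

lemma sets_pivot_below: "pivot_below \<beta> \<in> sets (H \<Otimes>\<^sub>M borel)"
  unfolding pivot_below_def by measurable

text \<open>Conditionally on W, the pivot is uniform, so its unconditional law is uniform as well.\<close>
lemma emeasure_pivot_below:
  assumes atomless: "AE \<omega> in M. \<forall>v. measure (K (W \<omega>)) {v} = 0" and \<beta>: "0 < \<beta>" "\<beta> < 1"
  shows "emeasure M {\<omega>\<in>space M. (W \<omega>, T \<omega>) \<in> pivot_below \<beta>} = \<beta>"
proof -
  have "AE \<omega> in M. emeasure (K (W \<omega>)) (Pair (W \<omega>) -` pivot_below \<beta>) = \<beta>"
    using atomless
  proof (rule AE_mp, intro AE_I2 impI)
    fix \<omega> assume \<omega>: "\<omega> \<in> space M" and "\<forall>v. measure (K (W \<omega>)) {v} = 0"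
    moreover have h: "W \<omega> \<in> space H" using measurable_space[OF W_measurable \<omega>] .
    ultimately have "measure (K (W \<omega>)) (Pair (W \<omega>) -` pivot_below \<beta>) = \<beta>"
      using \<beta> by (simp add: pivot_below_def space_pair_measure measure_dev_cdf_less prob_space_K sets_K)
    then show "emeasure (K (W \<omega>)) (Pair (W \<omega>) -` pivot_below \<beta>) = \<beta>"
      using prob_space_K[OF h] by (simp add: finite_measure.emeasure_eq_measure prob_space.finite_measure)
  qed
  then show ?thesis
    by (simp add: emeasure_W_T_in[OF sets_pivot_below] nn_integral_cong_AE emeasure_space_1)
qed

lemma prob_pivot_less:
  assumes atomless: "AE \<omega> in M. \<forall>v. measure (K (W \<omega>)) {v} = 0" and \<beta>: "0 < \<beta>" "\<beta> < 1"
    and T': "T' \<in> borel_measurable M" "AE \<omega> in M. T' \<omega> = T \<omega>"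
  shows "prob {\<omega>\<in>space M. dev_cdf (K (W \<omega>)) \<bar>T' \<omega> - cond_mean (K (W \<omega>))\<bar> < \<beta>} = \<beta>"
proof -
  note [measurable] = W_measurable T_measurable T'(1)
  have "prob {\<omega>\<in>space M. dev_cdf (K (W \<omega>)) \<bar>T' \<omega> - cond_mean (K (W \<omega>))\<bar> < \<beta>}
      = prob {\<omega>\<in>space M. (W \<omega>, T \<omega>) \<in> pivot_below \<beta>}"
  proof (rule measure_eq_AE)
    show "AE \<omega> in M. \<omega> \<in> {\<omega>\<in>space M. dev_cdf (K (W \<omega>)) \<bar>T' \<omega> - cond_mean (K (W \<omega>))\<bar> < \<beta>}
        \<longleftrightarrow> \<omega> \<in> {\<omega>\<in>space M. (W \<omega>, T \<omega>) \<in> pivot_below \<beta>}"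
      using T'(2) by eventually_elim
        (auto simp: pivot_below_def space_pair_measure dest: measurable_space[OF W_measurable])
    show "{\<omega>\<in>space M. (W \<omega>, T \<omega>) \<in> pivot_below \<beta>} \<in> sets M"
      using measurable_sets[OF W_T_measurable sets_pivot_below] by (simp add: vimage_def Int_def conj_commute)
  qed measurable
  also have "\<dots> = \<beta>" using emeasure_pivot_below[OF atomless \<beta>] \<beta> by (simp add: emeasure_eq_measure)
  finally show ?thesis .
qed

end

lemma distr_PiM_lborel_translate:
  fixes c :: "'i \<Rightarrow> real"
  assumes J: "finite J"
  shows "distr (PiM J (\<lambda>_. lborel)) (PiM J (\<lambda>_. lborel)) (\<lambda>w. \<lambda>i\<in>J. w i + c i) = PiM J (\<lambda>_. lborel)"
proof -
  interpret product_sigma_finite "\<lambda>_. lborel :: real measure"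
    by (simp add: product_sigma_finite_def lborel.sigma_finite_measure_axioms)
  have translate: "(\<lambda>w. \<lambda>i\<in>J. w i + c i) \<in> PiM J (\<lambda>_. lborel) \<rightarrow>\<^sub>M PiM J (\<lambda>_. lborel)"
    by (intro measurable_restrict) (auto intro!: measurable_component_singleton simp: measurable_lborel2)
  show ?thesis
  proof (rule PiM_eqI[OF J])
    fix A assume A: "\<And>i. i \<in> J \<Longrightarrow> A i \<in> sets (lborel :: real measure)"
    have "(\<lambda>w. \<lambda>i\<in>J. w i + c i) -` Pi\<^sub>E J A \<inter> space (PiM J (\<lambda>_. lborel)) = Pi\<^sub>E J (\<lambda>i. (\<lambda>x. x + c i) -` A i)"
      by (auto simp: space_PiM PiE_def Pi_def extensional_def)
    then have "emeasure (distr (PiM J (\<lambda>_. lborel)) (PiM J (\<lambda>_. lborel)) (\<lambda>w. \<lambda>i\<in>J. w i + c i)) (Pi\<^sub>E J A)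
       = emeasure (PiM J (\<lambda>_. lborel)) (Pi\<^sub>E J (\<lambda>i. (\<lambda>x. x + c i) -` A i))"
      using A translate by (subst emeasure_distr) (auto intro!: sets_PiM_I_finite J)
    also have "\<dots> = (\<Prod>i\<in>J. emeasure lborel ((\<lambda>x. x + c i) -` A i))"
      using A J measurable_sets_borel[of "\<lambda>x. x + c _" borel] by (subst emeasure_PiM) auto
    also have "\<dots> = (\<Prod>i\<in>J. emeasure lborel (A i))"
    proof (rule prod.cong[OF refl])
      fix i assume i: "i \<in> J"
      have "emeasure lborel (A i) = emeasure (distr lborel borel ((+) (c i))) (A i)"
        by (simp add: lborel_distr_plus)
      also have "\<dots> = emeasure lborel ((\<lambda>x. x + c i) -` A i)"
        using A[OF i] by (subst emeasure_distr) (auto simp: add.commute[of "c i"] intro!: arg_cong[where f="emeasure lborel"])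
      finally show "emeasure lborel ((\<lambda>x. x + c i) -` A i) = emeasure lborel (A i)" by simp
    qed
    finally show "emeasure (distr (PiM J (\<lambda>_. lborel)) (PiM J (\<lambda>_. lborel)) (\<lambda>w. \<lambda>i\<in>J. w i + c i)) (Pi\<^sub>E J A)
        = (\<Prod>i\<in>J. emeasure lborel (A i))" .
  qed simp
qed

lemma nn_integral_PiM_lborel_translate:
  fixes c :: "'i \<Rightarrow> real" and f :: "('i \<Rightarrow> real) \<Rightarrow> ennreal"
  assumes J: "finite J" and f: "f \<in> borel_measurable (PiM J (\<lambda>_. lborel))"
  shows "(\<integral>\<^sup>+ w. f w \<partial>PiM J (\<lambda>_. lborel)) = (\<integral>\<^sup>+ w. f (\<lambda>i\<in>J. w i + c i) \<partial>PiM J (\<lambda>_. lborel))"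
proof -
  have "(\<lambda>w. \<lambda>i\<in>J. w i + c i) \<in> PiM J (\<lambda>_. lborel) \<rightarrow>\<^sub>M PiM J (\<lambda>_. lborel)"
    by (intro measurable_restrict) (auto intro!: measurable_component_singleton simp: measurable_lborel2)
  then show ?thesis
    using f by (subst (1) distr_PiM_lborel_translate[OF J, of c, symmetric]) (simp add: nn_integral_distr)
qed

text \<open>Fubini after shearing along d, so that the inner integrals run over lines parallel to d.\<close>
lemma emeasure_PiM_lborel_by_lines:
  fixes d :: "'i \<Rightarrow> real"
  assumes I: "finite I" and j: "j \<in> I" and dj: "d j \<noteq> 0"
    and G: "G \<in> sets (PiM I (\<lambda>_. lborel))"
  shows "emeasure (PiM I (\<lambda>_. lborel)) G = (\<integral>\<^sup>+ w. (\<integral>\<^sup>+ s. indicator G (\<lambda>i\<in>I. (w(j := 0)) i + (s / d j) * d i)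
    \<partial>lborel) \<partial>PiM (I - {j}) (\<lambda>_. lborel))"
proof -
  interpret product_sigma_finite "\<lambda>_. lborel :: real measure"
    by (simp add: product_sigma_finite_def lborel.sigma_finite_measure_axioms)
  define J where "J = I - {j}"
  have IJ: "I = insert j J" "j \<notin> J" "finite J" using j I by (auto simp: J_def)
  define shear where "shear x = (\<lambda>i\<in>I. if i = j then x j else x i + (x j / d j) * d i)" for x
  define F :: "('i \<Rightarrow> real) \<Rightarrow> ennreal" where "F x = indicator G (shear x)" for x
  have "shear \<in> PiM I (\<lambda>_. lborel) \<rightarrow>\<^sub>M PiM I (\<lambda>_. lborel)"
    unfolding shear_def using j
    by (intro measurable_restrict) (auto simp: measurable_lborel2 intro!: measurable_component_singleton)
  then have F: "F \<in> borel_measurable (PiM (insert j J) (\<lambda>_. lborel))"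
    unfolding F_def IJ(1)[symmetric] by (rule measurable_compose[OF _ borel_measurable_indicator[OF G]])
  have slice: "(\<lambda>w. indicator G (w(j := s)) :: ennreal) \<in> borel_measurable (PiM J (\<lambda>_. lborel))" for s
  proof -
    have "(\<lambda>w. w(j := s)) \<in> PiM J (\<lambda>_. lborel) \<rightarrow>\<^sub>M PiM I (\<lambda>_. lborel)"
      using IJ by (intro measurable_PiM_single') (auto simp: space_PiM PiE_def extensional_def)
    then show ?thesis by (rule measurable_compose[OF _ borel_measurable_indicator[OF G]])
  qed
  have "emeasure (PiM I (\<lambda>_. lborel)) G = (\<integral>\<^sup>+ s. (\<integral>\<^sup>+ w. indicator G (w(j := s)) \<partial>PiM J (\<lambda>_. lborel)) \<partial>lborel)"
    using G IJ by (simp add: product_nn_integral_insert_rev flip: nn_integral_indicator)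
  also have "\<dots> = (\<integral>\<^sup>+ s. (\<integral>\<^sup>+ w. F (w(j := s)) \<partial>PiM J (\<lambda>_. lborel)) \<partial>lborel)"
  proof (rule nn_integral_cong)
    fix s
    have "(\<lambda>i\<in>J. w i + (s / d j) * d i)(j := s) = shear (w(j := s))" for w
      unfolding shear_def using IJ by (auto simp: fun_eq_iff)
    then show "(\<integral>\<^sup>+ w. indicator G (w(j := s)) \<partial>PiM J (\<lambda>_. lborel)) = (\<integral>\<^sup>+ w. F (w(j := s)) \<partial>PiM J (\<lambda>_. lborel))"
      using nn_integral_PiM_lborel_translate[OF IJ(3) slice, where c="\<lambda>i. (s / d j) * d i"] by (simp add: F_def)
  qed
  also have "\<dots> = (\<integral>\<^sup>+ w. (\<integral>\<^sup>+ s. F (w(j := s)) \<partial>lborel) \<partial>PiM J (\<lambda>_. lborel))"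
    using F IJ by (simp flip: product_nn_integral_insert_rev[OF IJ(3,2) F] product_nn_integral_insert[OF IJ(3,2) F])
  also have "shear (w(j := s)) = (\<lambda>i\<in>I. (w(j := 0)) i + (s / d j) * d i)" for w s
    unfolding shear_def using dj IJ by (auto simp: fun_eq_iff)
  then have "(\<integral>\<^sup>+ w. (\<integral>\<^sup>+ s. F (w(j := s)) \<partial>lborel) \<partial>PiM J (\<lambda>_. lborel))
      = (\<integral>\<^sup>+ w. (\<integral>\<^sup>+ s. indicator G (\<lambda>i\<in>I. (w(j := 0)) i + (s / d j) * d i) \<partial>lborel) \<partial>PiM J (\<lambda>_. lborel))"
    by (simp add: F_def)
  finally show ?thesis by (simp add: J_def)
qed

lemma PiM_lborel_null_if_countable_lines:
  fixes d :: "'i \<Rightarrow> real"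
  assumes I: "finite I" and j: "j \<in> I" and dj: "d j \<noteq> 0"
    and G: "G \<in> sets (PiM I (\<lambda>_. lborel))"
    and lines: "\<And>z. z \<in> space (PiM I (\<lambda>_. lborel)) \<Longrightarrow> countable {t. (\<lambda>i\<in>I. z i + t * d i) \<in> G}"
  shows "G \<in> null_sets (PiM I (\<lambda>_. lborel))"
proof -
  have "emeasure (PiM I (\<lambda>_. lborel)) G = (\<integral>\<^sup>+ w. 0 \<partial>PiM (I - {j}) (\<lambda>_. lborel :: real measure))"
    unfolding emeasure_PiM_lborel_by_lines[where d=d, OF I j dj G]
  proof (rule nn_integral_cong)
    fix w assume "w \<in> space (PiM (I - {j}) (\<lambda>_. lborel :: real measure))"
    then have "w(j := 0) \<in> space (PiM I (\<lambda>_. lborel))"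
      using j by (auto simp: space_PiM PiE_def extensional_def)
    then have "countable ((\<lambda>t. t * d j) ` {t. (\<lambda>i\<in>I. (w(j := 0)) i + t * d i) \<in> G})"
      by (intro countable_image lines)
    moreover have "{s. (\<lambda>i\<in>I. (w(j := 0)) i + (s / d j) * d i) \<in> G}
        = (\<lambda>t. t * d j) ` {t. (\<lambda>i\<in>I. (w(j := 0)) i + t * d i) \<in> G}"
    proof (intro set_eqI iffI)
      fix s assume "s \<in> {s. (\<lambda>i\<in>I. (w(j := 0)) i + (s / d j) * d i) \<in> G}"
      then show "s \<in> (\<lambda>t. t * d j) ` {t. (\<lambda>i\<in>I. (w(j := 0)) i + t * d i) \<in> G}"
        using dj by (intro image_eqI[of _ _ "s / d j"]) auto
    qed (use dj in auto)
    ultimately have "{s. (\<lambda>i\<in>I. (w(j := 0)) i + (s / d j) * d i) \<in> G} \<in> null_sets lborel"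
      by (simp add: countable_imp_null_set_lborel)
    from AE_not_in[OF this]
    have "(\<integral>\<^sup>+ s. indicator G (\<lambda>i\<in>I. (w(j := 0)) i + (s / d j) * d i) \<partial>lborel) = (\<integral>\<^sup>+ s. 0 \<partial>(lborel :: real measure))"
      by (intro nn_integral_cong_AE) (auto elim: eventually_mono simp: indicator_def)
    then show "(\<integral>\<^sup>+ s. indicator G (\<lambda>i\<in>I. (w(j := 0)) i + (s / d j) * d i) \<partial>lborel) = 0"
      by simp
  qed
  then show ?thesis using G by (simp add: null_sets_def)
qed

lemma PiM_density_lborel:
  fixes f :: "'i \<Rightarrow> real \<Rightarrow> ennreal"
  assumes I: "finite I" and f: "\<And>i. f i \<in> borel_measurable borel"
    and sigma_finite: "\<And>i. sigma_finite_measure (density lborel (f i))"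
  shows "PiM I (\<lambda>i. density lborel (f i)) = density (PiM I (\<lambda>_. lborel)) (\<lambda>x. \<Prod>i\<in>I. f i (x i))"
proof -
  interpret L: product_sigma_finite "\<lambda>_. lborel :: real measure"
    by (simp add: product_sigma_finite_def lborel.sigma_finite_measure_axioms)
  interpret D: product_sigma_finite "\<lambda>i. density lborel (f i)"
    using sigma_finite by (simp add: product_sigma_finite_def)
  show ?thesis
  proof (rule D.PiM_eqI[OF I, symmetric])
    fix A assume A: "\<And>i. i \<in> I \<Longrightarrow> A i \<in> sets (density lborel (f i))"
    have "Pi\<^sub>E I A \<in> sets (PiM I (\<lambda>_. lborel))"
      using A I by (intro sets_PiM_I_finite) auto
    moreover have "(\<lambda>x. \<Prod>i\<in>I. f i (x i)) \<in> borel_measurable (PiM I (\<lambda>_. lborel))"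
      using f[measurable] by measurable
    ultimately have "emeasure (density (PiM I (\<lambda>_. lborel)) (\<lambda>x. \<Prod>i\<in>I. f i (x i))) (Pi\<^sub>E I A)
        = (\<integral>\<^sup>+ x. (\<Prod>i\<in>I. f i (x i)) * indicator (Pi\<^sub>E I A) x \<partial>PiM I (\<lambda>_. lborel))"
      by (simp add: emeasure_density)
    also have "\<dots> = (\<integral>\<^sup>+ x. (\<Prod>i\<in>I. f i (x i) * indicator (A i) (x i)) \<partial>PiM I (\<lambda>_. lborel))"
    proof (rule nn_integral_cong)
      fix x assume x: "x \<in> space (PiM I (\<lambda>_. lborel :: real measure))"
      have "(indicator (Pi\<^sub>E I A) x :: ennreal) = (\<Prod>i\<in>I. indicator (A i) (x i))"
      proof (cases "x \<in> Pi I A")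
        case True
        then have "(\<Prod>i\<in>I. indicator (A i) (x i) :: ennreal) = (\<Prod>i\<in>I. 1)"
          by (intro prod.cong) (auto simp: indicator_def)
        then show ?thesis using x True by (simp add: indicator_def space_PiM PiE_def)
      next
        case False
        then obtain i where "i \<in> I" "x i \<notin> A i" by auto
        then have "(\<Prod>i\<in>I. indicator (A i) (x i) :: ennreal) = 0"
          using I by (intro prod_zero bexI[of _ i]) auto
        then show ?thesis using False by (simp add: indicator_def PiE_def)
      qed
      then show "(\<Prod>i\<in>I. f i (x i)) * indicator (Pi\<^sub>E I A) x = (\<Prod>i\<in>I. f i (x i) * indicator (A i) (x i))"
        by (simp add: prod.distrib)
    qed
    also have "\<dots> = (\<Prod>i\<in>I. \<integral>\<^sup>+ x. f i x * indicator (A i) x \<partial>lborel)"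
      using A f I by (subst L.product_nn_integral_prod) (auto simp: measurable_lborel1)
    also have "\<dots> = (\<Prod>i\<in>I. emeasure (density lborel (f i)) (A i))"
      using A f by (intro prod.cong refl) (simp add: emeasure_density)
    finally show "emeasure (density (PiM I (\<lambda>_. lborel)) (\<lambda>x. \<Prod>i\<in>I. f i (x i))) (Pi\<^sub>E I A)
        = (\<Prod>i\<in>I. emeasure (density lborel (f i)) (A i))" .
  qed (simp cong: sets_PiM_cong)
qed

lemma PiM_absolutely_continuous_lborel:
  fixes \<mu> :: "'i \<Rightarrow> real measure"
  assumes I: "finite I" and \<mu>: "\<And>i. i \<in> I \<Longrightarrow> prob_space (\<mu> i)" "\<And>i. i \<in> I \<Longrightarrow> sets (\<mu> i) = sets borel"
    and ac: "\<And>i. i \<in> I \<Longrightarrow> absolutely_continuous lborel (\<mu> i)"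
    and N: "N \<in> null_sets (PiM I (\<lambda>_. lborel))"
  shows "N \<in> null_sets (PiM I \<mu>)"
proof -
  \<comment> \<open>outside I the factors are irrelevant; Lebesgue measure there keeps the family \<sigma>-finite\<close>
  define f where "f i = (if i \<in> I then RN_deriv lborel (\<mu> i) else (\<lambda>_. 1))" for i
  have density_f: "density lborel (f i) = (if i \<in> I then \<mu> i else lborel)" for i
    using ac \<mu>(2) by (simp add: f_def density_1 sigma_finite_measure.density_RN_deriv[OF lborel.sigma_finite_measure_axioms])
  have f: "f i \<in> borel_measurable borel" for i
    by (auto simp: f_def measurable_lborel1[symmetric])
  have "sigma_finite_measure (density lborel (f i))" for i
    using \<mu>(1) by (simp add: density_f prob_space_imp_sigma_finite lborel.sigma_finite_measure_axioms)
  then have "PiM I \<mu> = density (PiM I (\<lambda>_. lborel)) (\<lambda>x. \<Prod>i\<in>I. f i (x i))"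
    by (simp add: PiM_density_lborel[OF I f, symmetric] density_f cong: PiM_cong)
  moreover have "(\<lambda>x. \<Prod>i\<in>I. f i (x i)) \<in> borel_measurable (PiM I (\<lambda>_. lborel))"
    using f[measurable] by measurable
  ultimately show ?thesis
    using N AE_not_in[OF N] by (auto simp: null_sets_density_iff elim!: AE_mp)
qed

lemma (in prob_space) AE_indep_notin_null:
  fixes Z :: "'i \<Rightarrow> 'a \<Rightarrow> real"
  assumes I: "finite I" "I \<noteq> {}" and indep: "indep_vars (\<lambda>_. borel) Z I"
    and ac: "\<And>i. i \<in> I \<Longrightarrow> absolutely_continuous lborel (distr M borel (Z i))"
    and N: "N \<in> null_sets (PiM I (\<lambda>_. lborel))"
  shows "AE \<omega> in M. (\<lambda>i\<in>I. Z i \<omega>) \<notin> N"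
proof -
  have Z: "Z i \<in> borel_measurable M" if "i \<in> I" for i
    using indep that by (auto simp: indep_vars_def)
  have "N \<in> null_sets (PiM I (\<lambda>i. distr M borel (Z i)))"
    by (rule PiM_absolutely_continuous_lborel[OF I(1)]) (use Z ac N in \<open>auto intro: prob_space_distr\<close>)
  moreover have "distr M (PiM I (\<lambda>_. borel)) (\<lambda>\<omega>. \<lambda>i\<in>I. Z i \<omega>) = PiM I (\<lambda>i. distr M borel (Z i))"
    using indep Z by (subst (asm) indep_vars_iff_distr_eq_PiM'[OF I(2)]) auto
  ultimately have "N \<in> null_sets (distr M (PiM I (\<lambda>_. borel)) (\<lambda>\<omega>. \<lambda>i\<in>I. Z i \<omega>))"
    by simp
  moreover have "(\<lambda>\<omega>. \<lambda>i\<in>I. Z i \<omega>) \<in> M \<rightarrow>\<^sub>M PiM I (\<lambda>_. borel)"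
    using Z by (intro measurable_restrict) auto
  ultimately have "(\<lambda>\<omega>. \<lambda>i\<in>I. Z i \<omega>) -` N \<inter> space M \<in> null_sets M"
    by (simp add: null_sets_distr_iff)
  then show ?thesis by (rule AE_I') auto
qed

lemma AE_lborel_notin_exp_image:
  assumes N: "N \<in> null_sets (lborel :: real measure)"
  shows "AE x in lborel. x \<notin> exp ` N"
proof -
  have "negligible N" using N by (simp add: negligible_iff_null_sets null_sets_completionI)
  then have "negligible (exp ` N)"
    by (intro negligible_differentiable_image_negligible)
      (auto simp: differentiable_on_def intro!: differentiable_at_withinI
        field_differentiable_imp_differentiable field_differentiable_within_exp)
  then have "AE x in lebesgue. x \<notin> exp ` N" by (simp add: negligible_iff_null_sets AE_not_in)
  then show ?thesis by (simp add: AE_completion_iff)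
qed

lemma absolutely_continuous_distr_ln:
  fixes X :: "'a \<Rightarrow> real"
  assumes X: "distributed M lborel X f" and nonpos: "\<And>x. x \<le> 0 \<Longrightarrow> f x = 0"
  shows "absolutely_continuous lborel (distr M borel (\<lambda>\<omega>. ln (X \<omega>)))"
  unfolding absolutely_continuous_def
proof
  fix N :: "real set" assume N: "N \<in> null_sets lborel"
  then have "N \<in> sets borel" by auto
  then have "ln -` N \<in> sets borel" by (intro measurable_sets_borel[OF _ \<open>N \<in> sets borel\<close>]) auto
  then have "emeasure (distr M borel (\<lambda>\<omega>. ln (X \<omega>))) N = (\<integral>\<^sup>+ x. f x * indicator (ln -` N) x \<partial>lborel)"
    using distributed_measurable[OF X] N
    by (subst emeasure_distr) (auto simp: vimage_def simp flip: distributed_emeasure[OF X])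
  also have "\<dots> = (\<integral>\<^sup>+ x. 0 \<partial>(lborel :: real measure))"
    using AE_lborel_notin_exp_image[OF N]
  proof (intro nn_integral_cong_AE, eventually_elim)
    fix x assume "x \<notin> exp ` N"
    then have "x > 0 \<Longrightarrow> ln x \<notin> N" by (metis exp_ln image_eqI)
    then show "f x * indicator (ln -` N) x = 0" by (cases "x \<le> 0") (auto simp: nonpos)
  qed
  finally show "N \<in> null_sets (distr M borel (\<lambda>\<omega>. ln (X \<omega>)))"
    using N by (auto simp: null_sets_def)
qed

lemma (in prob_space) AE_pos_if_density_vanishes_nonpos:
  fixes X :: "'a \<Rightarrow> real"
  assumes X: "distributed M lborel X f" and nonpos: "\<And>x. x \<le> 0 \<Longrightarrow> f x = 0"
  shows "AE \<omega> in M. X \<omega> > 0"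
proof -
  have "emeasure M (X -` {..0} \<inter> space M) = (\<integral>\<^sup>+ x. f x * indicator {..0} x \<partial>lborel)"
    by (rule distributed_emeasure[OF X]) simp
  also have "\<dots> = (\<integral>\<^sup>+ x. 0 \<partial>(lborel :: real measure))"
    by (rule nn_integral_cong) (auto simp: indicator_def nonpos)
  finally have "X -` {..0} \<inter> space M \<in> null_sets M"
    using distributed_measurable[OF X] by (auto simp: null_sets_def)
  then show ?thesis by (rule AE_I') auto
qed

lemma gt_last_if_strict_decreasing:
  fixes lam :: "nat \<Rightarrow> real"
  assumes dec: "\<forall>l\<in>{1..<L}. lam l > lam (Suc l)" and l: "1 \<le> l" "l < L"
  shows "lam l > lam L"
  using l
proof (induction "L - l" arbitrary: l)
  case (Suc k)
  show ?case
  proof (cases "Suc l = L")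
    case True then show ?thesis using dec Suc.prems by auto
  next
    case False
    then have "lam (Suc l) > lam L" using Suc by auto
    moreover have "lam l > lam (Suc l)" using dec Suc.prems by auto
    ultimately show ?thesis by simp
  qed
qed simp

lemma one_add_mult_diff_pos:
  fixes r a :: real
  assumes "0 \<le> r" "r < 1" "0 \<le> a"
  shows "1 + r * (a - 1) > 0"
  using assms mult_nonneg_nonneg[of r a] by (subst right_diff_distrib) linarith

lemma gvec_eq:
  assumes r: "0 \<le> r" "r < 1" and lam: "0 \<le> lam l" "0 \<le> lam L"
  shows "gvec lam L r l = (lam l - lam L) / ((1 + r * (lam l - 1)) * (1 + r * (lam L - 1)))"
proof -
  define a where "a t = 1 + t * (lam l - 1)" for t
  define b where "b t = 1 + t * (lam L - 1)" for t
  have ab: "a r > 0" "b r > 0" unfolding a_def b_def using one_add_mult_diff_pos r lam by auto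
  have "((\<lambda>t. a t / b t) has_real_derivative ((lam l - 1) * b r - a r * (lam L - 1)) / (b r * b r)) (at r)"
    using ab unfolding a_def b_def by (intro DERIV_divide) (auto intro!: derivative_eq_intros)
  from DERIV_chain2[OF DERIV_ln_divide[of "a r / b r"] this]
  have "((\<lambda>t. ln (a t / b t)) has_real_derivative
      (1 / (a r / b r)) * (((lam l - 1) * b r - a r * (lam L - 1)) / (b r * b r))) (at r)"
    using ab by simp
  moreover have "(lam l - 1) * b r - a r * (lam L - 1) = lam l - lam L"
    by (simp add: a_def b_def algebra_simps)
  ultimately have "((\<lambda>t. ln (fl lam L l t)) has_real_derivative (lam l - lam L) / (a r * b r)) (at r)"
    using ab by (simp add: fl_def a_def b_def)
  then show ?thesis unfolding gvec_def a_def b_def by (rule DERIV_imp_deriv)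
qed

lemma fl_variance_ratio:
  fixes sa se :: real
  assumes "0 \<le> sa" "0 < se"
  shows "fl lam L l (sa / (sa + se)) = (lam l * sa + se) / (lam L * sa + se)"
proof -
  have "1 + sa / (sa + se) * (x - 1) = (x * sa + se) / (sa + se)" for x
    using assms by (simp add: field_simps)
  then show ?thesis using assms by (simp add: fl_def)
qed

text \<open>Both U (with v = V) and X (with v = S) are of this form.\<close>
definition scaled_ratio :: "(nat \<Rightarrow> nat) \<Rightarrow> nat \<Rightarrow> (nat \<Rightarrow> real) \<Rightarrow> nat \<Rightarrow> real" where
  "scaled_ratio rr L v = (\<lambda>l. (v l / real (rr l)) / (v L / real (rr L)))"

lemma scaled_ratio_scale:
  assumes "c l \<noteq> 0" "c L \<noteq> 0"
  shows "scaled_ratio rr L (\<lambda>i. c i * v i) l / (c l / c L) = scaled_ratio rr L v l"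
  using assms by (simp add: scaled_ratio_def field_simps)

lemma ln_scaled_ratio_exp:
  assumes "rr l > 0" "rr L > 0"
  shows "ln (scaled_ratio rr L (\<lambda>i. exp (z i)) l) = (z l - ln (rr l)) - (z L - ln (rr L))"
  using assms by (simp add: scaled_ratio_def ln_div ln_mult)

lemma scaled_ratio_measurable [measurable]:
  assumes "(\<lambda>x. v x l) \<in> borel_measurable N" "(\<lambda>x. v x L) \<in> borel_measurable N"
  shows "(\<lambda>x. scaled_ratio rr L (v x) l) \<in> borel_measurable N"
  using assms unfolding scaled_ratio_def by measurable

lemma nonneg_if_strict_decreasing:
  fixes lam :: "nat \<Rightarrow> real"
  assumes "\<forall>l\<in>{1..<L}. lam l > lam (Suc l)" "lam L \<ge> 0" "l \<in> {1..L}"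
  shows "lam l \<ge> 0"
  using gt_last_if_strict_decreasing[of L lam l] assms by (cases "l = L") auto

lemma gvec_pos:
  assumes "0 \<le> r" "r < 1" "0 \<le> lam L" "lam L < lam l"
  shows "gvec lam L r l > 0"
  using assms one_add_mult_diff_pos[of r "lam l"] one_add_mult_diff_pos[of r "lam L"]
  by (simp add: gvec_eq)

lemma fl_pos:
  assumes "0 \<le> r" "r < 1" "0 \<le> lam l" "0 \<le> lam L"
  shows "fl lam L l r > 0"
  using assms one_add_mult_diff_pos[of r "lam l"] one_add_mult_diff_pos[of r "lam L"]
  by (simp add: fl_def)

lemma scaled_ratio_variance_div_fl:
  fixes sa se :: real
  assumes "0 \<le> sa" "0 < se" "0 \<le> lam l" "0 \<le> lam L"
  shows "scaled_ratio rr L (\<lambda>i. (lam i * sa + se) * v i) l / fl lam L l (sa / (sa + se))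
    = scaled_ratio rr L v l"
proof -
  have "lam l * sa + se \<noteq> 0" "lam L * sa + se \<noteq> 0"
    using assms by (simp_all add: add_nonneg_pos less_imp_neq[symmetric])
  then show ?thesis
    using assms scaled_ratio_scale[of "\<lambda>i. lam i * sa + se" l L rr v] by (simp add: fl_variance_ratio)
qed

lemma Hfun_eq_eta:
  assumes "\<forall>l\<in>{1..L-1}. x l / fl lam L l r = u l"
  shows "Hfun lam L Mb r x = eta L Mb u"
  using assms by (simp add: Hfun_def eta_def)

lemma Tfun_diff_phi_eq_tau:
  assumes "\<forall>l\<in>{1..L-1}. x l > 0 \<and> fl lam L l r > 0 \<and> x l / fl lam L l r = u l"
  shows "Tfun L x - phi lam L r = tau L u"
  unfolding Tfun_def phi_def tau_def sum_subtractf[symmetric]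
proof (intro sum.cong refl)
  fix l assume "l \<in> {1..L-1}"
  with assms have "x l > 0" "fl lam L l r > 0" "u l = x l / fl lam L l r" by auto
  then show "ln (x l) - ln (fl lam L l r) = ln (u l)" by (simp add: ln_div)
qed

lemma Hfun_variance_scaled_ratio:
  fixes sa se :: real
  assumes "\<forall>l\<in>{1..L}. lam l \<ge> 0" "0 \<le> sa" "0 < se"
  shows "Hfun lam L Mb (sa / (sa + se)) (scaled_ratio rr L (\<lambda>i. (lam i * sa + se) * v i))
    = eta L Mb (scaled_ratio rr L v)"
  using assms by (intro Hfun_eq_eta ballI scaled_ratio_variance_div_fl) auto

lemma Tfun_diff_phi_variance_scaled_ratio:
  fixes sa se :: real
  assumes lam: "\<forall>l\<in>{1..L}. lam l \<ge> 0" and "0 \<le> sa" "0 < se"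
    and v: "\<forall>l\<in>{1..L}. v l > 0" and rr: "\<forall>l\<in>{1..L}. rr l > 0"
  shows "Tfun L (scaled_ratio rr L (\<lambda>i. (lam i * sa + se) * v i)) - phi lam L (sa / (sa + se))
    = tau L (scaled_ratio rr L v)"
proof (intro Tfun_diff_phi_eq_tau ballI conjI)
  fix l assume "l \<in> {1..L-1}"
  then have "l \<in> {1..L}" "L \<in> {1..L}" by auto
  with assms show "scaled_ratio rr L (\<lambda>i. (lam i * sa + se) * v i) l > 0"
    by (auto simp: scaled_ratio_def intro!: divide_pos_pos mult_pos_pos add_nonneg_pos)
  from \<open>l \<in> {1..L}\<close> \<open>L \<in> {1..L}\<close> assms show "fl lam L l (sa / (sa + se)) > 0"
    by (intro fl_pos) (auto simp: field_simps)
  from \<open>l \<in> {1..L}\<close> \<open>L \<in> {1..L}\<close> assms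
  show "scaled_ratio rr L (\<lambda>i. (lam i * sa + se) * v i) l / fl lam L l (sa / (sa + se))
      = scaled_ratio rr L v l"
    by (intro scaled_ratio_variance_div_fl) auto
qed

lemma eta_measurable [measurable]:
  assumes "\<And>l. l \<in> {1..L-1} \<Longrightarrow> (\<lambda>x. u x l) \<in> borel_measurable N"
  shows "(\<lambda>x. eta L Mb (u x)) \<in> N \<rightarrow>\<^sub>M hspace L"
  unfolding eta_def hspace_def using assms
  by (intro measurable_restrict borel_measurable_sum borel_measurable_times borel_measurable_const
      borel_measurable_ln)

lemma tau_measurable [measurable]:
  assumes "\<And>l. l \<in> {1..L-1} \<Longrightarrow> (\<lambda>x. u x l) \<in> borel_measurable N"
  shows "(\<lambda>x. tau L (u x)) \<in> borel_measurable N"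
  unfolding tau_def using assms by (intro borel_measurable_sum borel_measurable_ln)

lemma ln_scaled_ratio_exp_shift:
  assumes rr: "\<forall>l\<in>{1..L}. rr l > 0" and z': "\<forall>l\<in>{1..L}. z' l = z l + t * d l" and "d L = 0"
    and l: "l \<in> {1..L-1}"
  shows "ln (scaled_ratio rr L (\<lambda>i. exp (z' i)) l) = ln (scaled_ratio rr L (\<lambda>i. exp (z i)) l) + t * d l"
proof -
  have "l \<in> {1..L}" "L \<in> {1..L}" using l by auto
  then show ?thesis
    using rr z' \<open>d L = 0\<close> by (simp add: ln_scaled_ratio_exp algebra_simps)
qed

lemma eta_scaled_ratio_exp_shift:
  assumes rr: "\<forall>l\<in>{1..L}. rr l > 0" and z': "\<forall>l\<in>{1..L}. z' l = z l + t * d l" and "d L = 0"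
    and orth: "\<forall>i<L-2. (\<Sum>l=1..L-1. Mb i l * d l) = 0"
  shows "eta L Mb (scaled_ratio rr L (\<lambda>i. exp (z' i))) = eta L Mb (scaled_ratio rr L (\<lambda>i. exp (z i)))"
proof -
  have "(\<Sum>l=1..L-1. Mb i l * ln (scaled_ratio rr L (\<lambda>i. exp (z' i)) l))
      = (\<Sum>l=1..L-1. Mb i l * ln (scaled_ratio rr L (\<lambda>i. exp (z i)) l) + t * (Mb i l * d l))" for i
    using ln_scaled_ratio_exp_shift[OF assms(1-3)] by (intro sum.cong) (auto simp: algebra_simps)
  then show ?thesis using orth by (auto simp: eta_def sum.distrib simp flip: sum_distrib_left)
qed

lemma tau_scaled_ratio_exp_shift:
  assumes rr: "\<forall>l\<in>{1..L}. rr l > 0" and z': "\<forall>l\<in>{1..L}. z' l = z l + t * d l" and "d L = 0"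
  shows "tau L (scaled_ratio rr L (\<lambda>i. exp (z' i))) = tau L (scaled_ratio rr L (\<lambda>i. exp (z i))) + t * (\<Sum>l=1..L-1. d l)"
proof -
  have "tau L (scaled_ratio rr L (\<lambda>i. exp (z' i)))
      = (\<Sum>l=1..L-1. ln (scaled_ratio rr L (\<lambda>i. exp (z i)) l) + t * d l)"
    unfolding tau_def using ln_scaled_ratio_exp_shift[OF assms] by (rule sum.cong[OF refl])
  then show ?thesis by (simp add: tau_def sum.distrib sum_distrib_left)
qed

lemma eta_tau_scaled_ratio_exp_measurable:
  "(\<lambda>z. (eta L Mb (scaled_ratio rr L (\<lambda>i. exp (z i))), tau L (scaled_ratio rr L (\<lambda>i. exp (z i)))))
    \<in> PiM {1..L} (\<lambda>_. lborel) \<rightarrow>\<^sub>M hspace L \<Otimes>\<^sub>M borel"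
proof -
  have "(\<lambda>z. z l) \<in> borel_measurable (PiM {1..L} (\<lambda>_. lborel))" if "l \<in> {1..L}" for l
    using measurable_component_singleton[OF that, of "\<lambda>_. lborel"] by simp
  then have ratio: "(\<lambda>z. scaled_ratio rr L (\<lambda>i. exp (z i)) l) \<in> borel_measurable (PiM {1..L} (\<lambda>_. lborel))"
    if "l \<in> {1..L-1}" for l
    using that by (intro scaled_ratio_measurable borel_measurable_exp) auto
  show ?thesis by (rule measurable_Pair[OF eta_measurable[OF ratio] tau_measurable[OF ratio]])
qed

text \<open>In log coordinates, moving along (g, 0) fixes \<eta> and moves \<tau> at speed \<Sum> g > 0, so such a line
  meets the preimage of G in a countable set.\<close>
lemma null_sets_log_coordinates_preimage:
  fixes Mb :: "nat \<Rightarrow> nat \<Rightarrow> real" and g :: "nat \<Rightarrow> real"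
  assumes L2: "L \<ge> 2" and rr: "\<forall>l\<in>{1..L}. rr l > 0"
    and orth: "\<forall>i<L-2. (\<Sum>l=1..L-1. Mb i l * g l) = 0" and g_pos: "\<forall>l\<in>{1..L-1}. g l > 0"
    and G: "G \<in> sets (hspace L \<Otimes>\<^sub>M borel)"
    and sections: "\<And>h. h \<in> space (hspace L) \<Longrightarrow> countable (Pair h -` G)"
  defines "\<Phi> z \<equiv> scaled_ratio rr L (\<lambda>i. exp (z i))"
  shows "{z \<in> space (PiM {1..L} (\<lambda>_. lborel)). (eta L Mb (\<Phi> z), tau L (\<Phi> z)) \<in> G}
    \<in> null_sets (PiM {1..L} (\<lambda>_. lborel))"
    (is "?G' \<in> null_sets ?P")
proof -
  define d where "d l = (if l < L then g l else 0)" for l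
  define s where "s = (\<Sum>l=1..L-1. g l)"
  have "s > 0" unfolding s_def using g_pos L2 by (intro sum_pos) auto
  have d_sum: "(\<Sum>l=1..L-1. d l) = s" and d_orth: "\<forall>i<L-2. (\<Sum>l=1..L-1. Mb i l * d l) = 0"
  proof -
    have "(\<Sum>l=1..L-1. f l * d l) = (\<Sum>l=1..L-1. f l * g l)" for f
      by (rule sum.cong) (auto simp: d_def)
    from this[of "\<lambda>_. 1"] this[of "Mb _"]
    show "(\<Sum>l=1..L-1. d l) = s" "\<forall>i<L-2. (\<Sum>l=1..L-1. Mb i l * d l) = 0"
      using orth by (simp_all add: s_def)
  qed
  from measurable_sets[OF eta_tau_scaled_ratio_exp_measurable G] have G': "?G' \<in> sets ?P"
    by (simp add: \<Phi>_def vimage_def Int_def conj_commute)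
  show ?thesis
  proof (rule PiM_lborel_null_if_countable_lines[OF _ _ _ G', where j=1 and d=d])
    fix z assume z: "z \<in> space ?P"
    have "eta L Mb (\<Phi> z) \<in> space (hspace L)" by (simp add: hspace_def eta_def space_PiM)
    moreover have "T \<in> Pair (eta L Mb (\<Phi> z)) -` G"
      if "(\<lambda>i\<in>{1..L}. z i + t * d i) \<in> ?G'" and "T = tau L (\<Phi> z) + t * s" for t T
    proof -
      have "\<forall>l\<in>{1..L}. (\<lambda>i\<in>{1..L}. z i + t * d i) l = z l + t * d l" by simp
      moreover have "d L = 0" by (simp add: d_def)
      ultimately have "eta L Mb (\<Phi> (\<lambda>i\<in>{1..L}. z i + t * d i)) = eta L Mb (\<Phi> z)"
        and "tau L (\<Phi> (\<lambda>i\<in>{1..L}. z i + t * d i)) = tau L (\<Phi> z) + t * s"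
        unfolding \<Phi>_def d_sum[symmetric]
        by (rule eta_scaled_ratio_exp_shift[OF rr _ _ d_orth] tau_scaled_ratio_exp_shift[OF rr])+
      then show ?thesis using that by simp
    qed
    then have "{t. (\<lambda>i\<in>{1..L}. z i + t * d i) \<in> ?G'}
        \<subseteq> (\<lambda>v. (v - tau L (\<Phi> z)) / s) ` (Pair (eta L Mb (\<Phi> z)) -` G)"
      using \<open>s > 0\<close> by (auto simp: image_iff intro!: bexI[of _ "tau L (\<Phi> z) + _ * s"])
    ultimately show "countable {t. (\<lambda>i\<in>{1..L}. z i + t * d i) \<in> ?G'}"
      by (meson countable_image countable_subset sections)
  next
    have "1 \<in> {1..L-1}" using L2 by simp
    with g_pos have "g 1 > 0" by blast
    with L2 show "d 1 \<noteq> 0" by (simp add: d_def)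
  qed (use L2 in auto)
qed

lemma chi2_density_nonpos: "x \<le> 0 \<Longrightarrow> chi2_density k x = 0"
  by (simp add: chi2_density_def)

lemma (in prob_space) AE_chi2_pos:
  assumes chi2: "\<forall>l\<in>I. distributed M lborel (V l) (\<lambda>x. ennreal (chi2_density (rr l) x))"
    and "finite I"
  shows "AE \<omega> in M. \<forall>l\<in>I. V l \<omega> > 0"
  using assms by (intro AE_finite_allI AE_pos_if_density_vanishes_nonpos[OF chi2[rule_format]])
    (auto simp: chi2_density_nonpos)

lemma (in prob_space) chi2_eta_tau_null:
  fixes V :: "nat \<Rightarrow> 'a \<Rightarrow> real" and Mb :: "nat \<Rightarrow> nat \<Rightarrow> real" and g :: "nat \<Rightarrow> real"
  assumes L2: "L \<ge> 2" and rr: "\<forall>l\<in>{1..L}. rr l > 0"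
    and indep: "indep_vars (\<lambda>_. borel) V {1..L}"
    and chi2: "\<forall>l\<in>{1..L}. distributed M lborel (V l) (\<lambda>x. ennreal (chi2_density (rr l) x))"
    and orth: "\<forall>i<L-2. (\<Sum>l=1..L-1. Mb i l * g l) = 0" and g_pos: "\<forall>l\<in>{1..L-1}. g l > 0"
    and G: "G \<in> sets (hspace L \<Otimes>\<^sub>M borel)"
    and sections: "\<And>h. h \<in> space (hspace L) \<Longrightarrow> countable (Pair h -` G)"
  defines "U \<omega> \<equiv> scaled_ratio rr L (\<lambda>i. V i \<omega>)"
  shows "emeasure M {\<omega>\<in>space M. (eta L Mb (U \<omega>), tau L (U \<omega>)) \<in> G} = 0"
proof -
  let ?\<Phi> = "\<lambda>z. scaled_ratio rr L (\<lambda>i. exp (z i))"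
  have V: "V l \<in> borel_measurable M" if "l \<in> {1..L}" for l
    using distributed_measurable[OF chi2[rule_format, OF that]] by simp
  have U_measurable: "(\<lambda>\<omega>. U \<omega> l) \<in> borel_measurable M" if "l \<in> {1..L-1}" for l
    unfolding U_def using that by (intro scaled_ratio_measurable V) auto
  have W_T: "(\<lambda>\<omega>. (eta L Mb (U \<omega>), tau L (U \<omega>))) \<in> M \<rightarrow>\<^sub>M hspace L \<Otimes>\<^sub>M borel"
    by (rule measurable_Pair[OF eta_measurable[OF U_measurable] tau_measurable[OF U_measurable]])
  have "AE \<omega> in M. (\<lambda>i\<in>{1..L}. ln (V i \<omega>)) \<notin>
      {z \<in> space (PiM {1..L} (\<lambda>_. lborel)). (eta L Mb (?\<Phi> z), tau L (?\<Phi> z)) \<in> G}"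
  proof (rule AE_indep_notin_null)
    show "indep_vars (\<lambda>_. borel) (\<lambda>i \<omega>. ln (V i \<omega>)) {1..L}"
      using indep_vars_compose2[OF indep, of "\<lambda>_. ln" "\<lambda>_. borel"] by simp
    show "absolutely_continuous lborel (distr M borel (\<lambda>\<omega>. ln (V i \<omega>)))" if "i \<in> {1..L}" for i
      using chi2_density_nonpos by (intro absolutely_continuous_distr_ln[OF chi2[rule_format, OF that]]) simp
  qed (use L2 null_sets_log_coordinates_preimage[OF L2 rr orth g_pos G sections] in auto)
  moreover have "AE \<omega> in M. \<forall>l\<in>{1..L}. V l \<omega> > 0"
    by (rule AE_chi2_pos[OF chi2 finite_atLeastAtMost])
  ultimately have "AE \<omega> in M. (eta L Mb (U \<omega>), tau L (U \<omega>)) \<notin> G"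
  proof eventually_elim
    case (elim \<omega>)
    have "?\<Phi> (\<lambda>i\<in>{1..L}. ln (V i \<omega>)) l = U \<omega> l" if "l \<in> {1..L-1}" for l
      using that elim(2) by (auto simp: U_def scaled_ratio_def)
    then have "eta L Mb (?\<Phi> (\<lambda>i\<in>{1..L}. ln (V i \<omega>))) = eta L Mb (U \<omega>)"
      and "tau L (?\<Phi> (\<lambda>i\<in>{1..L}. ln (V i \<omega>))) = tau L (U \<omega>)"
      by (simp_all add: eta_def tau_def)
    with elim(1) show ?case by (auto simp: space_PiM)
  qed
  then show ?thesis
    using measurable_sets[OF W_T G] by (subst (asm) AE_iff_measurable[OF _ refl]) (auto simp: vimage_def Int_def conj_commute)
qed

lemma cond_kernel_if_is_cond_dist:
  assumes "prob_space M" and cd: "is_cond_dist M L U Mb Kr"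
    and U: "\<And>l. l \<in> {1..L-1} \<Longrightarrow> (\<lambda>\<omega>. U \<omega> l) \<in> borel_measurable M"
  shows "cond_kernel M (hspace L) (\<lambda>\<omega>. eta L Mb (U \<omega>)) (\<lambda>\<omega>. tau L (U \<omega>)) Kr"
  using assms eta_measurable[OF U] tau_measurable[OF U]
  by (simp add: cond_kernel_def cond_kernel_axioms_def is_cond_dist_def)

lemma (in prob_space) chi2_pivot_uniform:
  fixes V :: "nat \<Rightarrow> 'a \<Rightarrow> real" and lam :: "nat \<Rightarrow> real"
  assumes L2: "L \<ge> 2" and lam_dec: "\<forall>l\<in>{1..<L}. lam l > lam (Suc l)" and "lam L \<ge> 0"
    and rr: "\<forall>l\<in>{1..L}. rr l > 0"
    and indep: "indep_vars (\<lambda>_. borel) V {1..L}"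
    and chi2: "\<forall>l\<in>{1..L}. distributed M lborel (V l) (\<lambda>x. ennreal (chi2_density (rr l) x))"
    and r: "0 \<le> r" "r < 1" and basis: "compl_basis L (gvec lam L r) Mb"
    and cond: "is_cond_dist M L (\<lambda>\<omega>. scaled_ratio rr L (\<lambda>i. V i \<omega>)) Mb Kr"
    and \<alpha>: "0 < \<alpha>" "\<alpha> < 1"
    and T': "T' \<in> borel_measurable M" "AE \<omega> in M. T' \<omega> = tau L (scaled_ratio rr L (\<lambda>i. V i \<omega>))"
  defines "W \<omega> \<equiv> eta L Mb (scaled_ratio rr L (\<lambda>i. V i \<omega>))"
  shows "prob {\<omega>\<in>space M. \<alpha> < 1 - dev_cdf (Kr (W \<omega>)) \<bar>T' \<omega> - cond_mean (Kr (W \<omega>))\<bar>} = 1 - \<alpha>"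
proof -
  have "V l \<in> borel_measurable M" if "l \<in> {1..L}" for l
    using distributed_measurable[OF chi2[rule_format, OF that]] by simp
  then interpret K: cond_kernel M "hspace L" W "\<lambda>\<omega>. tau L (scaled_ratio rr L (\<lambda>i. V i \<omega>))" Kr
    unfolding W_def using cond L2
    by (intro cond_kernel_if_is_cond_dist prob_space_axioms scaled_ratio_measurable) auto
  have "\<forall>l\<in>{1..L-1}. gvec lam L r l > 0"
    using r \<open>lam L \<ge> 0\<close> gt_last_if_strict_decreasing[OF lam_dec] by (auto intro!: gvec_pos)
  moreover have "\<forall>i<L-2. (\<Sum>l=1..L-1. Mb i l * gvec lam L r l) = 0"
    using basis by (simp add: compl_basis_def)
  ultimately have "AE \<omega> in M. \<forall>v. measure (Kr (W \<omega>)) {v} = 0"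
    using chi2_eta_tau_null[OF L2 rr indep chi2] by (intro K.AE_atomless) (simp add: W_def)
  from K.prob_pivot_less[OF this _ _ T', of "1 - \<alpha>"] \<alpha> show ?thesis
    by (simp add: less_diff_eq add.commute)
qed

theorem corollary2:
  fixes M :: "'a measure" and V :: "nat \<Rightarrow> 'a \<Rightarrow> real"
    and L :: nat and lam :: "nat \<Rightarrow> real" and rr :: "nat \<Rightarrow> nat"
    and sa se \<alpha> :: real
    and Mm :: "real \<Rightarrow> nat \<Rightarrow> nat \<Rightarrow> real"
    and K :: "real \<Rightarrow> (nat \<Rightarrow> real) \<Rightarrow> real measure"
  assumes L2: "L \<ge> 2"
    and lam_dec: "\<forall>l\<in>{1..<L}. lam l > lam (Suc l)"
    and lam_nonneg: "lam L \<ge> 0"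
    and rr_pos: "\<forall>l\<in>{1..L}. rr l > 0"
    and sa: "sa \<ge> 0" and se: "se > 0"
    and alpha: "0 < \<alpha>" "\<alpha> < 1"
    and P: "prob_space M"
    and indep: "prob_space.indep_vars M (\<lambda>_. borel) V {1..L}"
    and chi2: "\<forall>l\<in>{1..L}. distributed M lborel (V l) (\<lambda>x. ennreal (chi2_density (rr l) x))"
    and Mbasis: "\<forall>r\<in>{0..<1}. compl_basis L (gvec lam L r) (Mm r)"
    and Kcond: "\<forall>r\<in>{0..<1}. is_cond_dist M L
                   (\<lambda>\<omega> l. (V l \<omega> / real (rr l)) / (V L \<omega> / real (rr L))) (Mm r) (K r)"
  shows "let \<rho> = sa / (sa + se);
             S = (\<lambda>l \<omega>. (lam l * sa + se) * V l \<omega>);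
             X = (\<lambda>\<omega> l. (S l \<omega> / real (rr l)) / (S L \<omega> / real (rr L)))
         in prob_space.prob M {\<omega>\<in>space M. \<rho> \<in> plaus_interval lam L Mm K \<alpha> (X \<omega>)} = 1 - \<alpha>"
proof -
  interpret prob_space M by (rule P)
  define \<rho> where "\<rho> = sa / (sa + se)"
  define U where "U \<omega> = scaled_ratio rr L (\<lambda>i. V i \<omega>)" for \<omega>
  define X where "X \<omega> = scaled_ratio rr L (\<lambda>i. (lam i * sa + se) * V i \<omega>)" for \<omega>
  have \<rho>: "0 \<le> \<rho>" "\<rho> < 1" using sa se by (auto simp: \<rho>_def)
  have lam: "\<forall>l\<in>{1..L}. lam l \<ge> 0" using nonneg_if_strict_decreasing[OF lam_dec lam_nonneg] by blast
  have V [measurable]: "l \<in> {1..L} \<Longrightarrow> V l \<in> borel_measurable M" for l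
    using distributed_measurable[OF chi2[rule_format]] by simp
  have "(\<lambda>\<omega>. Tfun L (X \<omega>) - phi lam L \<rho>) \<in> borel_measurable M"
    unfolding Tfun_def tau_def[symmetric] X_def using L2
    by (intro borel_measurable_diff tau_measurable scaled_ratio_measurable) auto
  moreover have "AE \<omega> in M. Tfun L (X \<omega>) - phi lam L \<rho> = tau L (U \<omega>)"
    using AE_chi2_pos[OF chi2 finite_atLeastAtMost]
    by eventually_elim (simp add: X_def U_def \<rho>_def Tfun_diff_phi_variance_scaled_ratio lam sa se rr_pos)
  ultimately have "prob {\<omega>\<in>space M. \<alpha> < 1 - dev_cdf (K \<rho> (eta L (Mm \<rho>) (U \<omega>)))
      \<bar>Tfun L (X \<omega>) - phi lam L \<rho> - cond_mean (K \<rho> (eta L (Mm \<rho>) (U \<omega>)))\<bar>} = 1 - \<alpha>"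
    using Mbasis Kcond \<rho> alpha unfolding U_def
    by (intro chi2_pivot_uniform[OF L2 lam_dec lam_nonneg rr_pos indep chi2]) (auto simp: scaled_ratio_def)
  moreover have "Hfun lam L (Mm \<rho>) \<rho> (X \<omega>) = eta L (Mm \<rho>) (U \<omega>)" for \<omega>
    unfolding X_def U_def \<rho>_def using lam sa se by (rule Hfun_variance_scaled_ratio)
  ultimately show ?thesis
    using \<rho> by (simp add: Let_def plaus_interval_def plaus_def X_def \<rho>_def scaled_ratio_def)
qed

end
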